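(* Let $p$ be a prime and $A$ a commutative nilpotent $\mathbb{F}_p$-algebra of dimension $n$ with $A^p=0$; let $e$ be the integer with $A^e\ne0$, $A^{e+1}=0$. Let $i(A)$ be the number of ideals of $A$ and $s(A)$ the number of $\mathbb{F}_p$-subspaces of $A$. (1) If $e=2$, $p\ge3$ and $n\ge3$, then $i(A)\le \frac{2}{p}s(A)$. (2) If $e=3$, $p\ge3$ and $n\ge4$, then $i(A)\le\frac{2}{p^2}s(A)$.
   Context: Algebras are commutative, associative, not necessarily unital. *)

theory Defs
  imports Complex_Main "HOL-Computational_Algebra.Primes"
begin

text \<open>A (not necessarily unital) commutative associative algebra over F_p is modelled as a
type of class comm_ring (non-unital commutative ring) whose additive group has exponent p.
F_p-subspaces are then exactly the additive subgroups, and algebra ideals are the additive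
subgroups closed under multiplication by arbitrary elements.\<close>

definition nsmul :: "nat \<Rightarrow> 'a::ab_group_add \<Rightarrow> 'a" where
  "nsmul k x = (\<Sum>i<k. x)"

definition is_subspace :: "'a::ab_group_add set \<Rightarrow> bool" where
  "is_subspace S \<longleftrightarrow> 0 \<in> S \<and> (\<forall>x\<in>S. \<forall>y\<in>S. x + y \<in> S) \<and> (\<forall>x\<in>S. - x \<in> S)"

definition is_ideal :: "'a::comm_ring set \<Rightarrow> bool" where
  "is_ideal I \<longleftrightarrow> is_subspace I \<and> (\<forall>a. \<forall>x\<in>I. a * x \<in> I)"

text \<open>Additive span (= F_p-span when the additive group has exponent p).\<close>
inductive_set addspan :: "'a::ab_group_add set \<Rightarrow> 'a set" for S where
  zero: "0 \<in> addspan S"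
| base: "x \<in> S \<Longrightarrow> x \<in> addspan S"
| add: "x \<in> addspan S \<Longrightarrow> y \<in> addspan S \<Longrightarrow> x + y \<in> addspan S"
| neg: "x \<in> addspan S \<Longrightarrow> - x \<in> addspan S"

text \<open>Powers of the algebra: A^1 = A, A^(k+1) = span of products a*b with b in A^k.
(A^0 is set to A by convention; it is never used.)\<close>
fun apow :: "nat \<Rightarrow> 'a::comm_ring set" where
  "apow 0 = UNIV"
| "apow (Suc k) = (if k = 0 then UNIV else addspan {a * b | a b. b \<in> apow k})"

definition num_ideals :: "'a::comm_ring itself \<Rightarrow> nat" where
  "num_ideals _ = card {I :: 'a set. is_ideal I}"

definition num_subspaces :: "'a::comm_ring itself \<Rightarrow> nat" where
  "num_subspaces _ = card {S :: 'a set. is_subspace S}"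

end

(* If a subspace S
   is not contained in the annihilator Ann(A), nilpotency gives a nonzero element w(S) of Ann(A)
   of the form a x with x in S. Choosing it as a function of the set A S makes w(S) unchanged when
   elements of Ann(A) are adjoined to S, and every ideal I outside Ann(A) contains w(I). A subspace
   S containing z = w(S) equals V + F_p z for at least p complements V of z, and for at least p^2
   of them when S leaves Ann(A^2) but meets Ann(A^2) outside Ann(A); none of these V contains its
   witness w(V) = z. So outside Ann(A) the subspaces containing their witness, among them all
   ideals, are outnumbered by the others. The subspaces inside Ann(A) are outnumbered too: for v
   outside Ann(A), the spaces P + F_p (v + c), with P a proper subspace of Ann(A) and c running
   over representatives of distinct cosets of P, are distinct. For A^4 = 0 the same counting is
   done on the two layers Ann(A) and Ann(A^2). *)

theory Submission
  imports Defs "HOL-Number_Theory.Cong"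
begin

section \<open>Subspaces and adjoining a vector\<close>

lemma nsmul_0 [simp]: "nsmul 0 x = 0"
  by (simp add: nsmul_def)

lemma nsmul_Suc: "nsmul (Suc k) x = nsmul k x + x"
  by (simp add: nsmul_def)

lemma nsmul_1 [simp]: "nsmul 1 x = x"
  by (simp add: nsmul_def)

lemma nsmul_add_left: "nsmul (a + b) x = nsmul a x + nsmul b x"
  by (induction b) (simp_all add: nsmul_Suc add.assoc)

lemma nsmul_nsmul: "nsmul a (nsmul b x) = nsmul (a * b) x"
  by (induction a) (simp_all add: nsmul_Suc nsmul_add_left add.commute)

lemma nsmul_add_right: "nsmul k (x + y) = nsmul k x + nsmul k (y :: 'a :: ab_group_add)"
  by (induction k) (simp_all add: nsmul_Suc algebra_simps)

lemma nsmul_zero_right [simp]: "nsmul k (0 :: 'a :: ab_group_add) = 0"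
  by (induction k) (simp_all add: nsmul_Suc)

lemma mult_nsmul_right: "a * nsmul k x = nsmul k (a * x :: 'a :: comm_ring)"
  by (simp add: nsmul_def sum_distrib_left)

lemma nsmul_diff_nsmul:
  "k' \<le> k \<Longrightarrow> nsmul k x - nsmul k' x = nsmul (k - k') (x :: 'a :: ab_group_add)"
  by (metis add_diff_cancel_left' le_add_diff_inverse nsmul_add_left)

lemma subspace_0: "is_subspace S \<Longrightarrow> 0 \<in> S"
  and subspace_add: "is_subspace S \<Longrightarrow> x \<in> S \<Longrightarrow> y \<in> S \<Longrightarrow> x + y \<in> S"
  and subspace_uminus: "is_subspace S \<Longrightarrow> x \<in> S \<Longrightarrow> - x \<in> S"
  by (simp_all add: is_subspace_def)

lemma subspace_diff: "is_subspace S \<Longrightarrow> x \<in> S \<Longrightarrow> y \<in> S \<Longrightarrow> x - y \<in> S"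
  by (metis diff_conv_add_uminus subspace_add subspace_uminus)

lemma subspace_nsmul: "is_subspace S \<Longrightarrow> x \<in> S \<Longrightarrow> nsmul k x \<in> S"
  by (induction k) (simp_all add: nsmul_Suc subspace_0 subspace_add)

lemma subspace_zero: "is_subspace {0}"
  and subspace_UNIV: "is_subspace UNIV"
  by (simp_all add: is_subspace_def)

definition subspaces_in :: "'a::ab_group_add set \<Rightarrow> 'a set set" where
  "subspaces_in W = {S. is_subspace S \<and> S \<subseteq> W}"

lemma card_subspaces_in_Diff:
  assumes "U \<subseteq> (W :: 'a :: {ab_group_add, finite} set)"
  shows "card (subspaces_in W) = card (subspaces_in U) + card (subspaces_in W - subspaces_in U)"
proof -
  have "subspaces_in U \<subseteq> subspaces_in W"
    using assms unfolding subspaces_in_def by auto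
  then show ?thesis
    by (simp add: card_Diff_subset card_mono)
qed

definition adjoin :: "'a::ab_group_add set \<Rightarrow> 'a \<Rightarrow> 'a set" where
  "adjoin S x = {s + nsmul k x | s k. s \<in> S}"

lemma mem_adjoin_iff: "y \<in> adjoin S x \<longleftrightarrow> (\<exists>s k. s \<in> S \<and> y = s + nsmul k x)"
  unfolding adjoin_def by blast

lemma adjoin_memI: "s \<in> S \<Longrightarrow> s + nsmul k x \<in> adjoin S x"
  unfolding adjoin_def by blast

lemma subset_adjoin: "S \<subseteq> adjoin S x"
  using adjoin_memI[of _ S 0 x] by auto

lemma mem_adjoin: "is_subspace S \<Longrightarrow> x \<in> adjoin S x"
  by (metis add_0_left adjoin_memI nsmul_1 subspace_0)

lemma adjoin_subset: "is_subspace U \<Longrightarrow> S \<subseteq> U \<Longrightarrow> x \<in> U \<Longrightarrow> adjoin S x \<subseteq> U"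
  by (auto simp: mem_adjoin_iff) (meson subsetD subspace_add subspace_nsmul)

lemma mem_adjoin_adjoin_iff:
  "y \<in> adjoin (adjoin S a) b \<longleftrightarrow> (\<exists>s k j. s \<in> S \<and> y = s + nsmul k a + nsmul j b)"
  unfolding adjoin_def by blast

lemma adjoin_commute: "adjoin (adjoin S a) b = adjoin (adjoin S b) a"
proof -
  have "s + nsmul k a + nsmul j b = s + nsmul j b + nsmul k a" for s :: 'a and k j
    by (simp add: algebra_simps)
  then show ?thesis
    unfolding set_eq_iff mem_adjoin_adjoin_iff by (intro allI iffI; elim exE conjE) metis+
qed

definition complements :: "'a::ab_group_add \<Rightarrow> 'a set \<Rightarrow> 'a set set" where
  "complements z S = {V. is_subspace V \<and> z \<notin> V \<and> adjoin V z = S}"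

definition stable_witness :: "'a::ab_group_add set \<Rightarrow> ('a set \<Rightarrow> 'a) \<Rightarrow> bool" where
  "stable_witness Z w \<longleftrightarrow>
     (\<forall>S. is_subspace S \<and> \<not> S \<subseteq> Z \<longrightarrow> w S \<in> Z \<and> w S \<noteq> 0) \<and>
     (\<forall>S z. z \<in> Z \<longrightarrow> w (adjoin S z) = w S)"

lemma complements_witness_subset_fibre:
  assumes w: "stable_witness Z w" and "Z \<subseteq> D" "is_subspace D"
    and S: "is_subspace S" "S \<subseteq> C" "\<not> S \<subseteq> D"
  shows "complements (w S) S
    \<subseteq> {V. is_subspace V \<and> V \<subseteq> C \<and> \<not> V \<subseteq> D \<and> w V \<notin> V \<and> adjoin V (w V) = S}"
proof
  fix V assume "V \<in> complements (w S) S"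
  then have V: "is_subspace V" "w S \<notin> V" "adjoin V (w S) = S"
    unfolding complements_def by simp_all
  have "w S \<in> Z"
    using w S assms(2) unfolding stable_witness_def by blast
  then have "w V = w S"
    using w V(3) unfolding stable_witness_def by metis
  moreover have "V \<subseteq> S"
    using V(3) subset_adjoin by blast
  moreover have "\<not> V \<subseteq> D"
    using V(3) S(3) adjoin_subset[OF assms(3)] \<open>w S \<in> Z\<close> assms(2) by blast
  ultimately show "V \<in> {V. is_subspace V \<and> V \<subseteq> C \<and> \<not> V \<subseteq> D \<and> w V \<notin> V \<and> adjoin V (w V) = S}"
    using V S(2) by auto
qed

definition subspaces_off :: "'a::ab_group_add set \<Rightarrow> 'a \<Rightarrow> 'a set set" where
  "subspaces_off W v = {S. is_subspace S \<and> S \<subseteq> adjoin W v \<and> \<not> S \<subseteq> W}"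

definition incongruent_mod :: "'a::ab_group_add set \<Rightarrow> 'a set \<Rightarrow> bool" where
  "incongruent_mod P C \<longleftrightarrow> (\<forall>c\<in>C. \<forall>c'\<in>C. c - c' \<in> P \<longrightarrow> c = c')"

lemma incongruent_mod_image:
  assumes "is_subspace P" "\<And>i j. i \<in> I \<Longrightarrow> j \<in> I \<Longrightarrow> f i - f j \<in> P \<Longrightarrow> i = j"
  shows "incongruent_mod P (f ` I)" "card (f ` I) = card I"
proof -
  show "incongruent_mod P (f ` I)"
    using assms(2) unfolding incongruent_mod_def by blast
  have "inj_on f I"
    using assms subspace_0 by (intro inj_onI) fastforce
  then show "card (f ` I) = card I"
    by (rule card_image)
qed

lemma card_le_card_if_fibres:
  assumes "finite X" "finite Y" "\<And>y. y \<in> Y \<Longrightarrow> m \<le> card {x \<in> X. f x = y}"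
  shows "m * card Y \<le> card X"
proof -
  have "m * card Y \<le> (\<Sum>y\<in>Y. card {x \<in> X. f x = y})"
    using sum_mono[of Y "\<lambda>_. m"] assms(3) by (simp add: mult.commute)
  also have "\<dots> = card (\<Union>y\<in>Y. {x \<in> X. f x = y})"
    by (rule card_UN_disjoint[symmetric]) (use assms(1,2) in auto)
  also have "\<dots> \<le> card X"
    by (rule card_mono) (use assms(1) in auto)
  finally show ?thesis .
qed

section \<open>Counting subspaces of an elementary abelian group\<close>

locale elementary_abelian =
  fixes p :: nat and ty :: "'a :: {ab_group_add, finite} itself"
  assumes prime: "prime p" and nsmul_exponent: "\<And>x :: 'a. nsmul p x = 0"
begin

lemma p_pos: "p > 0"
  using prime prime_gt_0_nat by blast

lemma nsmul_eq_0_if_dvd: assumes "p dvd k" shows "nsmul k (x :: 'a) = 0"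
proof -
  obtain c where "k = c * p"
    using assms by (metis dvd_def mult.commute)
  then show ?thesis
    by (simp add: nsmul_exponent flip: nsmul_nsmul)
qed

lemma nsmul_mod: "nsmul (k mod p) x = nsmul k (x :: 'a)"
proof -
  have "nsmul k x = nsmul (k mod p) x + nsmul (p * (k div p)) x"
    by (simp flip: nsmul_add_left)
  then show ?thesis
    by (simp add: nsmul_eq_0_if_dvd)
qed

lemma uminus_eq_nsmul: "- (x :: 'a) = nsmul (p - 1) x"
proof -
  have "nsmul (p - 1) x + x = 0"
    using nsmul_Suc[of "p - 1" x] p_pos nsmul_exponent by simp
  then show ?thesis
    by (simp add: add_eq_0_iff2)
qed

lemma nsmul_cancel: assumes "\<not> p dvd k" obtains j where "nsmul j (nsmul k (x :: 'a)) = x"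
proof -
  have "coprime k p"
    using assms prime by (metis coprime_commute prime_imp_coprime)
  then obtain j where "[k * j = Suc 0] (mod p)"
    using cong_solve_coprime_nat by blast
  then have "(j * k) mod p = 1 mod p"
    by (simp add: cong_def mult.commute)
  then have "nsmul (j * k) x = x"
    using nsmul_mod[of "j * k" x] nsmul_mod[of 1 x] by (simp add: nsmul_Suc)
  then show thesis
    using that by (simp add: nsmul_nsmul)
qed

lemma dvd_if_nsmul_mem:
  assumes "is_subspace S" "(x :: 'a) \<notin> S" "nsmul k x \<in> S" shows "p dvd k"
proof (rule ccontr)
  assume "\<not> p dvd k"
  then obtain j where "nsmul j (nsmul k x) = x"
    by (rule nsmul_cancel)
  then show False
    using assms subspace_nsmul by metis
qed

lemma nsmul_eq_if_diff_mem:
  assumes "is_subspace S" "(z :: 'a) \<notin> S" "k < p" "k' < p" "nsmul k z - nsmul k' z \<in> S"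
  shows "k = k'"
proof -
  have "j = j'" if "j' \<le> j" "j < p" "nsmul j z - nsmul j' z \<in> S" for j j'
  proof -
    have "p dvd j - j'"
      using that(1,3) assms(1,2) dvd_if_nsmul_mem by (simp add: nsmul_diff_nsmul)
    moreover have "j - j' < p"
      using that(2) by linarith
    ultimately show ?thesis
      using that(1) by (cases "j - j' = 0") (auto dest: dvd_imp_le)
  qed
  moreover have "nsmul k' z - nsmul k z \<in> S"
    using subspace_uminus[OF assms(1,5)] by simp
  ultimately show ?thesis
    using assms(3,4,5) nat_le_linear[of k k'] by blast
qed

lemma subspace_adjoin: assumes "is_subspace S" shows "is_subspace (adjoin S (x :: 'a))"
  unfolding is_subspace_def
proof (intro conjI ballI)
  show "0 \<in> adjoin S x"
    using assms subset_adjoin subspace_0 by blast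
next
  fix u v assume "u \<in> adjoin S x" "v \<in> adjoin S x"
  then obtain s k s' k' where "s \<in> S" "s' \<in> S" "u = s + nsmul k x" "v = s' + nsmul k' x"
    unfolding mem_adjoin_iff by blast
  then show "u + v \<in> adjoin S x"
    using adjoin_memI[of "s + s'" S "k + k'" x] assms
    by (simp add: nsmul_add_left subspace_add algebra_simps)
next
  fix u assume "u \<in> adjoin S x"
  then obtain s k where "s \<in> S" "u = s + nsmul k x"
    unfolding mem_adjoin_iff by blast
  then have "- u = - s + nsmul ((p - 1) * k) x"
    using uminus_eq_nsmul[of "nsmul k x"] by (simp add: nsmul_nsmul)
  also have "\<dots> \<in> adjoin S x"
    by (rule adjoin_memI, rule subspace_uminus[OF assms \<open>s \<in> S\<close>])
  finally show "- u \<in> adjoin S x" .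
qed

lemma adjoin_exchange:
  assumes "is_subspace T" "y \<in> adjoin T x" "y \<notin> T" shows "(x :: 'a) \<in> adjoin T y"
proof -
  obtain t k where t: "t \<in> T" "y = t + nsmul k x"
    using assms(2) mem_adjoin_iff by blast
  then have "\<not> p dvd k"
    using assms(3) nsmul_eq_0_if_dvd by force
  then obtain j where "nsmul j (nsmul k x) = x"
    by (rule nsmul_cancel)
  then have "x = - nsmul j t + nsmul j y"
    using t(2) by (simp add: nsmul_add_right)
  also have "\<dots> \<in> adjoin T y"
    using assms(1) t(1) by (intro adjoin_memI subspace_uminus subspace_nsmul)
  finally show ?thesis .
qed

lemma nsmul_eq_if_translates_mem:
  assumes "is_subspace V" "(z :: 'a) \<notin> V" "k < p" "k' < p"
    and "u + nsmul k z \<in> V" "u + nsmul k' z \<in> V"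
  shows "k = k'"
  using nsmul_eq_if_diff_mem[OF assms(1-4)] subspace_diff[OF assms(1,5,6)] by simp

lemma complement_exists:
  assumes "is_subspace S" "z \<in> S" "(z :: 'a) \<noteq> 0"
  obtains V where "V \<in> complements z S"
proof -
  let ?A = "{T. is_subspace T \<and> T \<subseteq> S \<and> z \<notin> T}"
  have "{0} \<in> ?A"
    using assms(1,3) by (simp add: subspace_zero subspace_0)
  then have "?A \<noteq> {}"
    by blast
  from finite_has_maximal[OF finite this] obtain T
    where "T \<in> ?A" and maximal: "\<forall>T'\<in>?A. T \<subseteq> T' \<longrightarrow> T = T'" ..
  then have T: "is_subspace T" "T \<subseteq> S" "z \<notin> T"
    by simp_all
  have "adjoin T z = S"
  proof (rule ccontr)
    assume "adjoin T z \<noteq> S"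
    moreover have "adjoin T z \<subseteq> S"
      using T assms(1,2) by (simp add: adjoin_subset)
    ultimately obtain x where x: "x \<in> S" "x \<notin> adjoin T z"
      by blast
    have "z \<notin> adjoin T x"
      using x(2) T(1,3) adjoin_exchange by blast
    then have "adjoin T x \<in> ?A"
      using T x(1) assms(1) by (simp add: subspace_adjoin adjoin_subset)
    then have "T = adjoin T x"
      using maximal subset_adjoin by blast
    then have "x \<in> T"
      using mem_adjoin[OF T(1), of x] by blast
    then show False
      using x(2) subset_adjoin by blast
  qed
  then show thesis
    using T that unfolding complements_def by blast
qed

lemma adjoin_twist_not_mem:
  assumes "is_subspace T" "x \<notin> T" "z \<notin> adjoin T x" shows "z \<notin> adjoin T (x + nsmul k (z :: 'a))"
proof
  assume "z \<in> adjoin T (x + nsmul k z)"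
  moreover have "z \<notin> T"
    using assms(3) subset_adjoin by blast
  ultimately have "x + nsmul k z \<in> adjoin T z"
    using assms(1) adjoin_exchange by blast
  then have "(x + nsmul k z) - nsmul k z \<in> adjoin T z"
    using assms(1) by (intro subspace_diff subspace_nsmul subspace_adjoin mem_adjoin)
  then have "x \<in> adjoin T z"
    by simp
  then show False
    using assms adjoin_exchange by blast
qed

lemma adjoin_twist:
  assumes "is_subspace T" shows "adjoin (adjoin T (x + nsmul k z)) z = adjoin (adjoin T x) (z :: 'a)"
proof -
  have facts: "is_subspace (adjoin (adjoin T a) b)" "T \<subseteq> adjoin (adjoin T a) b"
    "a \<in> adjoin (adjoin T a) b" "b \<in> adjoin (adjoin T a) b" for a b :: 'a
    using assms by (auto intro: subspace_adjoin mem_adjoin subsetD[OF subset_adjoin])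
  have "x + nsmul k z \<in> adjoin (adjoin T x) z"
    using facts by (intro subspace_add subspace_nsmul)
  moreover have "(x + nsmul k z) - nsmul k z \<in> adjoin (adjoin T (x + nsmul k z)) z"
    using facts by (intro subspace_diff subspace_nsmul)
  ultimately show ?thesis
    using facts by (intro equalityI adjoin_subset) simp_all
qed

lemma adjoin_twist_mem_complements:
  assumes "is_subspace T" "x \<notin> T" "adjoin T x \<in> complements z S"
  shows "adjoin T (x + nsmul k z) \<in> complements (z :: 'a) S"
proof -
  have "z \<notin> adjoin T x" "adjoin (adjoin T x) z = S"
    using assms(3) unfolding complements_def by auto
  then show ?thesis
    unfolding complements_def using assms(1,2)
    by (simp add: subspace_adjoin adjoin_twist adjoin_twist_not_mem)
qed

lemma p_le_card_complements:
  assumes "V \<in> complements z S" "V \<noteq> {0}" shows "p \<le> card (complements (z :: 'a) S)"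
proof -
  obtain x where x: "x \<in> V" "x \<noteq> 0"
    using assms unfolding complements_def by (auto dest: subspace_0)
  then obtain T where T: "T \<in> complements x V"
    using assms complement_exists unfolding complements_def by blast
  then have T': "is_subspace T" "x \<notin> T" "adjoin T x \<in> complements z S"
    using assms(1) unfolding complements_def by auto
  let ?f = "\<lambda>k. adjoin T (x + nsmul k z)"
  have "inj_on ?f {..<p}"
  proof (rule inj_onI)
    fix k k' assume "k \<in> {..<p}" "k' \<in> {..<p}" "?f k = ?f k'"
    moreover have "z \<notin> ?f k" "is_subspace (?f k)"
      using adjoin_twist_mem_complements[OF T'] unfolding complements_def by auto
    moreover have "x + nsmul k z \<in> ?f k" "x + nsmul k' z \<in> ?f k'"
      using mem_adjoin[OF T'(1)] by auto
    ultimately show "k = k'"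
      by (intro nsmul_eq_if_translates_mem[of "?f k" z k k' x]) auto
  qed
  moreover have "?f ` {..<p} \<subseteq> complements z S"
    using adjoin_twist_mem_complements[OF T'] by blast
  ultimately show ?thesis
    using card_inj_on_le[of ?f "{..<p}"] by simp
qed

lemma adjoin_adjoin_twist_mem_complements:
  assumes H: "is_subspace H" "y \<notin> H" and x: "x \<notin> adjoin H y"
    and V: "adjoin (adjoin H y) x \<in> complements z S"
  shows "adjoin (adjoin H (y + nsmul l z)) (x + nsmul k (z :: 'a)) \<in> complements z S"
proof -
  let ?V = "adjoin (adjoin H y) x"
  have "is_subspace ?V" "z \<notin> ?V"
    using V unfolding complements_def by simp_all
  have "x \<notin> H"
    using x subset_adjoin by blast
  have "y \<notin> adjoin H x"
    using H x adjoin_exchange by blast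
  moreover have "adjoin (adjoin H x) y \<in> complements z S"
    by (subst adjoin_commute) (rule V)
  ultimately have twisted: "adjoin (adjoin H x) (y + nsmul l z) \<in> complements z S"
    using H(1) by (intro adjoin_twist_mem_complements subspace_adjoin)
  have "x \<notin> adjoin H (y + nsmul l z)"
  proof
    assume "x \<in> adjoin H (y + nsmul l z)"
    then have yl: "y + nsmul l z \<in> adjoin H x"
      using H(1) \<open>x \<notin> H\<close> adjoin_exchange by blast
    have "H \<subseteq> adjoin H y" "y \<in> adjoin H y" "adjoin H y \<subseteq> ?V" "x \<in> ?V"
      by (rule subset_adjoin, rule mem_adjoin[OF H(1)], rule subset_adjoin,
          rule mem_adjoin[OF subspace_adjoin[OF H(1)]])
    then have "adjoin H x \<subseteq> ?V" "y \<in> ?V"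
      using adjoin_subset[OF \<open>is_subspace ?V\<close>, of H x] by blast+
    then have "(y + nsmul l z) - y \<in> ?V"
      using yl \<open>is_subspace ?V\<close> subspace_diff by blast
    then have "p dvd l"
      using \<open>is_subspace ?V\<close> \<open>z \<notin> ?V\<close> dvd_if_nsmul_mem by simp
    then show False
      using yl \<open>y \<notin> adjoin H x\<close> nsmul_eq_0_if_dvd by simp
  qed
  moreover have "adjoin (adjoin H (y + nsmul l z)) x \<in> complements z S"
    by (subst adjoin_commute) (rule twisted)
  ultimately show ?thesis
    using H(1) by (intro adjoin_twist_mem_complements subspace_adjoin)
qed

lemma p2_le_card_complements:
  assumes V: "V \<in> complements z S" and T: "T \<in> complements x V" and "T \<noteq> {0}"
  shows "p * p \<le> card (complements (z :: 'a) S)"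
proof -
  have T': "is_subspace T" "x \<notin> T" "adjoin T x = V"
    using T unfolding complements_def by simp_all
  obtain y where y: "y \<in> T" "y \<noteq> 0"
    using assms(3) subspace_0[OF T'(1)] by blast
  then obtain H where "H \<in> complements y T"
    using T'(1) complement_exists by blast
  then have H: "is_subspace H" "y \<notin> H" "adjoin H y = T"
    unfolding complements_def by simp_all
  let ?f = "\<lambda>(k, l). adjoin (adjoin H (y + nsmul l z)) (x + nsmul k z)"
  have "x \<notin> adjoin H y" "adjoin (adjoin H y) x \<in> complements z S"
    using T'(2,3) H(3) V by simp_all
  then have family: "?f (k, l) \<in> complements z S" for k l
    using adjoin_adjoin_twist_mem_complements[OF H(1,2)] by simp
  have "inj_on ?f ({..<p} \<times> {..<p})"
  proof (rule inj_onI)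
    fix a b assume ab: "a \<in> {..<p} \<times> {..<p}" "b \<in> {..<p} \<times> {..<p}" "?f a = ?f b"
    obtain k l k' l' where a: "a = (k, l)" and b: "b = (k', l')"
      by (cases a, cases b)
    then have kl: "k < p" "l < p" "k' < p" "l' < p" and eq: "?f (k, l) = ?f (k', l')"
      using ab by auto
    have in_family: "x + nsmul i z \<in> ?f (i, j)" "y + nsmul j z \<in> ?f (i, j)" for i j
      using H(1) by (auto intro: mem_adjoin subspace_adjoin subsetD[OF subset_adjoin])
    have "is_subspace (?f (k, l))" "z \<notin> ?f (k, l)"
      using family[of k l] unfolding complements_def by simp_all
    moreover note in_family[where i = k and j = l] in_family[where i = k' and j = l']
    ultimately show "a = b"
      using a b kl eq nsmul_eq_if_translates_mem[of "?f (k, l)" z] by simp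
  qed
  moreover have "?f ` ({..<p} \<times> {..<p}) \<subseteq> complements z S"
    using family by auto
  ultimately show ?thesis
    using card_inj_on_le[of ?f "{..<p} \<times> {..<p}"] by (simp add: card_cartesian_product)
qed

lemma p_card_witness_mem_le:
  assumes w: "stable_witness Z w" and "Z \<subseteq> D" "is_subspace D"
  shows "p * card {S :: 'a set. is_subspace S \<and> S \<subseteq> C \<and> \<not> S \<subseteq> D \<and> w S \<in> S}
    \<le> card {S. is_subspace S \<and> S \<subseteq> C \<and> \<not> S \<subseteq> D \<and> w S \<notin> S}"
proof (rule card_le_card_if_fibres[where f = "\<lambda>V. adjoin V (w V)"])
  fix S assume "S \<in> {S :: 'a set. is_subspace S \<and> S \<subseteq> C \<and> \<not> S \<subseteq> D \<and> w S \<in> S}"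
  then have S: "is_subspace S" "S \<subseteq> C" "\<not> S \<subseteq> D" "w S \<in> S"
    by simp_all
  have z: "w S \<in> D" "w S \<noteq> 0"
    using w S(1,3) assms(2) unfolding stable_witness_def by blast+
  obtain V where V: "V \<in> complements (w S) S"
    using complement_exists S(1,4) z(2) by blast
  have "V \<noteq> {0}"
  proof
    assume "V = {0}"
    then have "S \<subseteq> D"
      using V z(1) subspace_0[OF assms(3)] adjoin_subset[OF assms(3)]
      unfolding complements_def by force
    then show False
      using S(3) by blast
  qed
  then have "p \<le> card (complements (w S) S)"
    using V p_le_card_complements by blast
  also have "\<dots> \<le> card {V \<in> {S. is_subspace S \<and> S \<subseteq> C \<and> \<not> S \<subseteq> D \<and> w S \<notin> S}. adjoin V (w V) = S}"
    using complements_witness_subset_fibre[OF w assms(2,3) S(1-3)] by (intro card_mono) auto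
  finally show "p \<le> card {V \<in> {S. is_subspace S \<and> S \<subseteq> C \<and> \<not> S \<subseteq> D \<and> w S \<notin> S}. adjoin V (w V) = S}" .
qed simp_all

lemma adjoin_adjoin_zero_inter_subset:
  assumes "is_subspace D" "is_subspace Z" "Z \<subseteq> D" "z \<in> Z" "x \<notin> D"
  shows "adjoin (adjoin {0} x) z \<inter> D \<subseteq> (Z :: 'a set)"
proof
  fix y assume y: "y \<in> adjoin (adjoin {0} x) z \<inter> D"
  then obtain i j where ij: "y = nsmul i x + nsmul j z"
    using mem_adjoin_adjoin_iff[of y "{0}" x z] by auto
  have "nsmul j z \<in> Z"
    using assms(2,4) subspace_nsmul by blast
  then have "nsmul i x \<in> D"
    using ij y assms(1,3) subspace_diff[of D y "nsmul j z"] by auto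
  then have "nsmul i x = 0"
    using dvd_if_nsmul_mem[OF assms(1,5)] nsmul_eq_0_if_dvd by blast
  then show "y \<in> Z"
    using ij \<open>nsmul j z \<in> Z\<close> by simp
qed

lemma p2_card_witness_mem_le:
  assumes w: "stable_witness Z w" and "is_subspace Z" "Z \<subseteq> D" "is_subspace D"
  shows "p * p * card {S :: 'a set. is_subspace S \<and> \<not> S \<subseteq> D \<and> w S \<in> S \<and> \<not> S \<inter> D \<subseteq> Z}
    \<le> card {S. is_subspace S \<and> \<not> S \<subseteq> D \<and> w S \<notin> S}"
proof (rule card_le_card_if_fibres[where f = "\<lambda>V. adjoin V (w V)"])
  fix S assume "S \<in> {S :: 'a set. is_subspace S \<and> \<not> S \<subseteq> D \<and> w S \<in> S \<and> \<not> S \<inter> D \<subseteq> Z}"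
  then have S: "is_subspace S" "\<not> S \<subseteq> D" "w S \<in> S" "\<not> S \<inter> D \<subseteq> Z"
    by simp_all
  define z where "z = w S"
  have z: "z \<in> Z" "z \<in> D" "z \<noteq> 0"
    using w S(1,2) assms(3) unfolding stable_witness_def z_def by blast+
  obtain V where V: "V \<in> complements z S"
    using complement_exists S(1,3) z(3) unfolding z_def by blast
  then have V': "is_subspace V" "adjoin V z = S"
    unfolding complements_def by simp_all
  have "\<not> V \<subseteq> D"
    using V'(2) S(2) z(2) adjoin_subset[OF assms(4)] by blast
  then obtain x where x: "x \<in> V" "x \<notin> D"
    by blast
  then obtain T where T: "T \<in> complements x V"
    using complement_exists V'(1) subspace_0[OF assms(4)] by blast
  have "T \<noteq> {0}"
  proof
    assume "T = {0}"
    then have "S = adjoin (adjoin {0} x) z"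
      using T V'(2) unfolding complements_def by simp
    then have "S \<inter> D \<subseteq> Z"
      using adjoin_adjoin_zero_inter_subset[OF assms(4,2,3) z(1) x(2)] by simp
    then show False
      using S(4) by blast
  qed
  then have "p * p \<le> card (complements z S)"
    using V T p2_le_card_complements by blast
  also have "\<dots> \<le> card {V \<in> {S. is_subspace S \<and> \<not> S \<subseteq> D \<and> w S \<notin> S}. adjoin V (w V) = S}"
    using complements_witness_subset_fibre[OF w assms(3,4) S(1) subset_UNIV S(2)]
    unfolding z_def by (intro card_mono) auto
  finally show "p * p \<le> card {V \<in> {S. is_subspace S \<and> \<not> S \<subseteq> D \<and> w S \<notin> S}. adjoin V (w V) = S}" .
qed simp_all

lemma card_adjoin_le: "card (adjoin W v) \<le> p * card (W :: 'a set)"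
proof -
  have "adjoin W v \<subseteq> (\<lambda>(w, k). w + nsmul k v) ` (W \<times> {..<p})"
  proof
    fix y assume "y \<in> adjoin W v"
    then obtain w k where "w \<in> W" "y = w + nsmul (k mod p) v"
      unfolding mem_adjoin_iff nsmul_mod by blast
    moreover have "k mod p < p"
      using p_pos by simp
    ultimately show "y \<in> (\<lambda>(w, k). w + nsmul k v) ` (W \<times> {..<p})"
      by force
  qed
  then have "card (adjoin W v) \<le> card ((\<lambda>(w, k). w + nsmul k v) ` (W \<times> {..<p}))"
    by (intro card_mono) simp_all
  also have "\<dots> \<le> card (W \<times> {..<p})"
    by (rule card_image_le) simp
  finally show ?thesis
    by (simp add: card_cartesian_product mult.commute)
qed

lemma card_le_card_subspaces_in:
  assumes "is_subspace W" shows "card W \<le> p * card (subspaces_in (W :: 'a set))"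
proof -
  let ?L = "(\<lambda>x. adjoin {0} x) ` W"
  have "W \<subseteq> \<Union> ?L"
    using mem_adjoin[OF subspace_zero] by blast
  then have "card W \<le> card (\<Union> ?L)"
    by (simp add: card_mono)
  also have "\<dots> \<le> (\<Sum>L\<in>?L. card L)"
    by (rule card_Union_le_sum_card)
  also have "\<dots> \<le> (\<Sum>L\<in>?L. p)"
    using card_adjoin_le[of "{0}"] by (intro sum_mono) auto
  also have "\<dots> \<le> p * card (subspaces_in W)"
  proof -
    have "adjoin {0} x \<subseteq> W" if "x \<in> W" for x
      using that assms subspace_0[OF assms] by (intro adjoin_subset) auto
    then have "?L \<subseteq> subspaces_in W"
      unfolding subspaces_in_def using subspace_adjoin[OF subspace_zero] by blast
    then show ?thesis
      by (simp add: card_mono mult.commute)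
  qed
  finally show ?thesis .
qed

lemma card_subspaces_in_ge:
  assumes "is_subspace W" "p ^ Suc k \<le> card (W :: 'a set)" shows "p ^ k \<le> card (subspaces_in W)"
proof -
  have "p * p ^ k \<le> card W"
    using assms(2) by simp
  also have "\<dots> \<le> p * card (subspaces_in W)"
    by (rule card_le_card_subspaces_in[OF assms(1)])
  finally show ?thesis
    using p_pos by simp
qed

lemma card_subspaces_in_ge_if_codim_le_1:
  assumes "is_subspace (W :: 'a set)" "card (UNIV :: 'a set) \<le> p * card W"
    and "p ^ Suc (Suc k) \<le> card (UNIV :: 'a set)"
  shows "p ^ k \<le> card (subspaces_in W)"
proof -
  have "p * p ^ Suc k \<le> p * card W"
    using le_trans[OF assms(3,2)] by simp
  then have "p ^ Suc k \<le> card W"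
    using p_pos by simp
  then show ?thesis
    by (rule card_subspaces_in_ge[OF assms(1)])
qed

lemma adjoin_translate_inter:
  assumes "is_subspace W" "v \<notin> W" "is_subspace P" "P \<subseteq> W" "c \<in> W"
  shows "adjoin P (v + c) \<inter> W = (P :: 'a set)"
proof
  show "P \<subseteq> adjoin P (v + c) \<inter> W"
    using subset_adjoin assms(4) by blast
  show "adjoin P (v + c) \<inter> W \<subseteq> P"
  proof
    fix y assume y: "y \<in> adjoin P (v + c) \<inter> W"
    then obtain t m where t: "t \<in> P" "y = t + nsmul m (v + c)"
      using mem_adjoin_iff[of y P "v + c"] by blast
    then have "nsmul m v = (y - t) - nsmul m c"
      by (simp add: nsmul_add_right)
    also have "\<dots> \<in> W"
      using y t(1) assms(1,4,5) by (blast intro: subspace_diff subspace_nsmul)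
    finally have "p dvd m"
      using dvd_if_nsmul_mem assms(1,2) by blast
    then show "y \<in> P"
      using t nsmul_eq_0_if_dvd by simp
  qed
qed

lemma adjoin_translate_mem_subspaces_off:
  assumes "is_subspace W" "v \<notin> W" "is_subspace P" "P \<subseteq> W" "c \<in> W"
  shows "adjoin P (v + c) \<in> subspaces_off W (v :: 'a)"
proof -
  have "v + c \<in> adjoin W v"
    using assms(1,5) by (metis add.commute adjoin_memI nsmul_1)
  moreover have "v + c \<notin> W"
    using assms(1,2,5) subspace_diff[of W "v + c" c] by auto
  moreover have "adjoin P (v + c) \<subseteq> adjoin W v"
    using assms(4) subset_adjoin[of W v] \<open>v + c \<in> adjoin W v\<close>
    by (intro adjoin_subset[OF subspace_adjoin[OF assms(1)]]) auto
  ultimately show ?thesis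
    unfolding subspaces_off_def using assms(3) subspace_adjoin mem_adjoin by blast
qed

lemma adjoin_inter_adjoin_subset:
  assumes "is_subspace (W :: 'a set)" "v' \<notin> adjoin W v" shows "adjoin W v \<inter> adjoin W v' \<subseteq> W"
proof
  fix x assume x: "x \<in> adjoin W v \<inter> adjoin W v'"
  then obtain w k where w: "w \<in> W" "x = w + nsmul k v'"
    using mem_adjoin_iff[of x W v'] by blast
  have "x - w \<in> adjoin W v"
    using x w(1) subset_adjoin subspace_diff[OF subspace_adjoin[OF assms(1)]] by blast
  then have "nsmul k v' \<in> adjoin W v"
    using w(2) by simp
  then have "p dvd k"
    using dvd_if_nsmul_mem[OF subspace_adjoin[OF assms(1)] assms(2)] by blast
  then show "x \<in> W"
    using w nsmul_eq_0_if_dvd by simp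
qed

lemma subspaces_off_disjoint:
  "is_subspace (W :: 'a set) \<Longrightarrow> v' \<notin> adjoin W v \<Longrightarrow> subspaces_off W v \<inter> subspaces_off W v' = {}"
  using adjoin_inter_adjoin_subset[of W v' v] unfolding subspaces_off_def by blast

lemma adjoin_translate_eq_imp:
  assumes W: "is_subspace W" "v \<notin> W"
    and P: "is_subspace P" "P \<subseteq> W" "c \<in> W" and P': "is_subspace P'" "P' \<subseteq> W" "c' \<in> W"
    and eq: "adjoin P (v + c) = adjoin P' (v + c')"
  shows "P' = P" "c - c' \<in> (P :: 'a set)"
proof -
  have inter: "adjoin P (v + c) \<inter> W = P" "adjoin P' (v + c') \<inter> W = P'"
    using adjoin_translate_inter[OF W] P P' by blast+
  then show "P' = P"
    using eq by simp
  have "v + c \<in> adjoin P (v + c)" "v + c' \<in> adjoin P (v + c)"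
    using mem_adjoin P(1) P'(1) eq by auto
  then have "(v + c) - (v + c') \<in> adjoin P (v + c)"
    using subspace_diff subspace_adjoin P(1) by blast
  moreover have "c - c' \<in> W"
    using subspace_diff[OF W(1) P(3) P'(3)] .
  ultimately show "c - c' \<in> P"
    using inter(1) by auto
qed

lemma sum_le_card_subspaces_off:
  assumes W: "is_subspace W" "v \<notin> W" and "\<P> \<subseteq> subspaces_in W"
    and C: "\<And>P. P \<in> \<P> \<Longrightarrow> \<exists>C \<subseteq> W. incongruent_mod P C \<and> m P \<le> card C"
  shows "(\<Sum>P\<in>\<P>. m P) \<le> card (subspaces_off W (v :: 'a))"
proof -
  have "\<forall>P\<in>\<P>. \<exists>C. C \<subseteq> W \<and> incongruent_mod P C \<and> m P \<le> card C"
    using C by blast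
  from bchoice[OF this] obtain C
    where C: "\<forall>P\<in>\<P>. C P \<subseteq> W \<and> incongruent_mod P (C P) \<and> m P \<le> card (C P)" ..
  have P: "is_subspace P" "P \<subseteq> W" if "P \<in> \<P>" for P
    using that assms(3) unfolding subspaces_in_def by auto
  let ?g = "\<lambda>(P, c). adjoin P (v + c)"
  have "inj_on ?g (Sigma \<P> C)"
  proof (rule inj_onI, clarify)
    fix P c P' c' assume Pc: "P \<in> \<P>" "c \<in> C P" "P' \<in> \<P>" "c' \<in> C P'"
      and eq: "adjoin P (v + c) = adjoin P' (v + c')"
    have "c \<in> W" "c' \<in> W"
      using C Pc by blast+
    note adjoin_translate_eq_imp[OF W P[OF Pc(1)] \<open>c \<in> W\<close> P[OF Pc(3)] \<open>c' \<in> W\<close> eq]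
    then show "P = P' \<and> c = c'"
      using C Pc unfolding incongruent_mod_def by blast
  qed
  moreover have "?g ` Sigma \<P> C \<subseteq> subspaces_off W v"
  proof clarify
    fix P c assume "P \<in> \<P>" "c \<in> C P"
    then show "adjoin P (v + c) \<in> subspaces_off W v"
      using C P by (intro adjoin_translate_mem_subspaces_off[OF W]) auto
  qed
  ultimately have "card (Sigma \<P> C) \<le> card (subspaces_off W v)"
    by (intro card_inj_on_le) simp_all
  moreover have "(\<Sum>P\<in>\<P>. m P) \<le> (\<Sum>P\<in>\<P>. card (C P))"
    using C by (intro sum_mono) blast
  ultimately show ?thesis
    by (simp add: card_SigmaI)
qed

lemma exists_incongruent_p:
  assumes "is_subspace W" "is_subspace P" "b \<in> W" "(b :: 'a) \<notin> P"
  shows "\<exists>C \<subseteq> W. incongruent_mod P C \<and> p \<le> card C"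
proof -
  let ?f = "\<lambda>k. nsmul k b"
  have "i = j" if "i \<in> {..<p}" "j \<in> {..<p}" "?f i - ?f j \<in> P" for i j
    using nsmul_eq_if_diff_mem[OF assms(2,4)] that by simp
  then have "incongruent_mod P (?f ` {..<p})" "card (?f ` {..<p}) = p"
    using incongruent_mod_image[OF assms(2), of "{..<p}" ?f] by auto
  moreover have "?f ` {..<p} \<subseteq> W"
    using assms(1,3) subspace_nsmul by blast
  ultimately show ?thesis
    by (intro exI[of _ "?f ` {..<p}"]) simp
qed

lemma exists_incongruent_p2:
  assumes "is_subspace W" "is_subspace U" "U \<subseteq> W" "is_subspace P" "P \<subseteq> U"
    and "b \<in> U" "b \<notin> P" "w \<in> W" "(w :: 'a) \<notin> U"
  shows "\<exists>C \<subseteq> W. incongruent_mod P C \<and> p * p \<le> card C"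
proof -
  let ?f = "\<lambda>(k, l). nsmul k b + nsmul l w"
  have "i = j" if ij: "i \<in> {..<p} \<times> {..<p}" "j \<in> {..<p} \<times> {..<p}" "?f i - ?f j \<in> P" for i j
  proof -
    obtain k l k' l' where i: "i = (k, l)" and j: "j = (k', l')"
      by (cases i, cases j)
    have diff: "?f i - ?f j = (nsmul k b - nsmul k' b) + (nsmul l w - nsmul l' w)"
      unfolding i j by (simp add: algebra_simps)
    have "nsmul k b - nsmul k' b \<in> U"
      using assms(2,6) by (intro subspace_diff subspace_nsmul)
    moreover have "?f i - ?f j \<in> U"
      using ij(3) assms(5) by blast
    ultimately have "(?f i - ?f j) - (nsmul k b - nsmul k' b) \<in> U"
      using assms(2) subspace_diff by blast
    then have "l = l'"
      using nsmul_eq_if_diff_mem[OF assms(2,9)] ij(1,2) unfolding diff i j by simp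
    then have "k = k'"
      using nsmul_eq_if_diff_mem[OF assms(4,7)] ij unfolding diff i j by simp
    then show ?thesis
      using \<open>l = l'\<close> i j by simp
  qed
  then have "incongruent_mod P (?f ` ({..<p} \<times> {..<p}))"
    "card (?f ` ({..<p} \<times> {..<p})) = p * p"
    using incongruent_mod_image[OF assms(4), of "{..<p} \<times> {..<p}" ?f] by (auto simp: card_cartesian_product)
  moreover have "?f ` ({..<p} \<times> {..<p}) \<subseteq> W"
    using assms(1,3,6,8) by (auto intro!: subspace_add subspace_nsmul)
  ultimately show ?thesis
    by (intro exI[of _ "?f ` ({..<p} \<times> {..<p})"]) simp
qed

lemma card_subspaces_off_ge:
  assumes "is_subspace W" "(v :: 'a) \<notin> W"
  shows "p * (card (subspaces_in W) - 1) \<le> card (subspaces_off W v)"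
proof -
  have "(\<Sum>P \<in> subspaces_in W - {W}. p) \<le> card (subspaces_off W v)"
  proof (rule sum_le_card_subspaces_off[OF assms])
    fix P assume "P \<in> subspaces_in W - {W}"
    then have "is_subspace P" "\<exists>b \<in> W. b \<notin> P"
      unfolding subspaces_in_def by auto
    then show "\<exists>C\<subseteq>W. incongruent_mod P C \<and> p \<le> card C"
      using exists_incongruent_p[OF assms(1)] by blast
  qed auto
  moreover have "W \<in> subspaces_in W"
    using assms(1) unfolding subspaces_in_def by simp
  ultimately show ?thesis
    by (simp add: mult.commute)
qed

lemma card_subspaces_off_ge_two_layers:
  assumes "is_subspace W" "is_subspace U" "U \<subseteq> W" "w \<in> W" "w \<notin> U" "(v :: 'a) \<notin> W"
  shows "p * p * (card (subspaces_in U) - 1) + p * card (subspaces_in W - subspaces_in U)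
    \<le> card (subspaces_off W v)"
proof -
  define A where "A = subspaces_in U - {U}"
  define B where "B = insert U (subspaces_in W - subspaces_in U - {W})"
  let ?m = "\<lambda>P. if P \<in> A then p * p else p"
  have "(\<Sum>P \<in> A \<union> B. ?m P) \<le> card (subspaces_off W v)"
  proof (rule sum_le_card_subspaces_off[OF assms(1,6)])
    show "A \<union> B \<subseteq> subspaces_in W"
      using assms(2,3) unfolding A_def B_def subspaces_in_def by auto
    fix P assume P: "P \<in> A \<union> B"
    show "\<exists>C\<subseteq>W. incongruent_mod P C \<and> ?m P \<le> card C"
    proof (cases "P \<in> A")
      case True
      then have "is_subspace P" "P \<subseteq> U" "\<exists>b \<in> U. b \<notin> P"
        unfolding A_def subspaces_in_def by auto
      then show ?thesis
        using exists_incongruent_p2[OF assms(1-3) _ _ _ _ assms(4,5)] True by auto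
    next
      case False
      then have "is_subspace P" "\<exists>b \<in> W. b \<notin> P"
        using P assms(2-5) unfolding A_def B_def subspaces_in_def by auto
      then show ?thesis
        using exists_incongruent_p[OF assms(1)] False by auto
    qed
  qed
  moreover have "B - A = B"
    unfolding A_def B_def subspaces_in_def by auto
  then have "(\<Sum>P \<in> A \<union> B. ?m P) = p * p * card A + p * card B"
    by (simp add: sum.If_cases Int_Un_distrib2 Diff_eq[symmetric] Un_Diff)
  moreover have "card A = card (subspaces_in U) - 1"
    using assms(2) unfolding A_def subspaces_in_def by simp
  moreover have "card B = card (subspaces_in W - subspaces_in U)"
  proof -
    have "W \<in> subspaces_in W - subspaces_in U" "U \<in> subspaces_in U"
      using assms(1-5) unfolding subspaces_in_def by auto
    moreover from this(1) have "card (subspaces_in W - subspaces_in U) > 0"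
      by (auto simp: card_gt_0_iff)
    ultimately show ?thesis
      unfolding B_def by (simp add: card_Diff_singleton_if)
  qed
  ultimately show ?thesis
    by simp
qed

lemma card_subspaces_not_in_ge:
  assumes "is_subspace W" "is_subspace U" "U \<subseteq> W" "w \<in> W" "w \<notin> U" "(v :: 'a) \<notin> W"
  defines "c \<equiv> p * p * (card (subspaces_in U) - 1) + p * card (subspaces_in W - subspaces_in U)"
  shows "2 * c \<le> card {S :: 'a set. is_subspace S \<and> \<not> S \<subseteq> W}
    \<or> (c \<le> card {S :: 'a set. is_subspace S \<and> \<not> S \<subseteq> W} \<and> card (UNIV :: 'a set) \<le> p * card W)"
proof -
  have off: "c \<le> card (subspaces_off W v')" if "v' \<notin> W" for v'
    unfolding c_def using card_subspaces_off_ge_two_layers assms(1-5) that by blast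
  have sub: "subspaces_off W v' \<subseteq> {S. is_subspace S \<and> \<not> S \<subseteq> W}" for v'
    unfolding subspaces_off_def by blast
  show ?thesis
  proof (cases "adjoin W v = UNIV")
    case True
    then have "card (UNIV :: 'a set) \<le> p * card W"
      using card_adjoin_le[of W v] by simp
    moreover have "c \<le> card {S :: 'a set. is_subspace S \<and> \<not> S \<subseteq> W}"
      using off[OF assms(6)] card_mono[OF _ sub] by (meson finite order_trans)
    ultimately show ?thesis
      by blast
  next
    case False
    then obtain v' where v': "v' \<notin> adjoin W v"
      by blast
    then have "2 * c \<le> card (subspaces_off W v) + card (subspaces_off W v')"
      using off[OF assms(6)] off subset_adjoin by (metis mult_2 add_mono subsetD)
    also have "\<dots> = card (subspaces_off W v \<union> subspaces_off W v')"
      using subspaces_off_disjoint[OF assms(1) v'] by (simp add: card_Un_disjoint)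
    also have "\<dots> \<le> card {S :: 'a set. is_subspace S \<and> \<not> S \<subseteq> W}"
      using sub by (intro card_mono) auto
    finally show ?thesis
      by blast
  qed
qed

end

section \<open>Annihilators and powers of the algebra\<close>

definition annihilator :: "'a::comm_ring set" where
  "annihilator = {x. \<forall>a. a * x = 0}"

definition annihilator2 :: "'a::comm_ring set" where
  "annihilator2 = {x. \<forall>a b. a * (b * x) = 0}"

definition products :: "'a::comm_ring set \<Rightarrow> 'a set" where
  "products S = {a * x | a x. x \<in> S}"

text \<open>Only meaningful for \<open>S\<close> not contained in the annihilator; otherwise the choice is
  from an empty set.\<close>

definition ann_witness :: "'a::comm_ring set \<Rightarrow> 'a" where
  "ann_witness S = (SOME z. z \<in> products S \<inter> annihilator \<and> z \<noteq> 0)"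

lemma subspace_annihilator: "is_subspace (annihilator :: 'a::comm_ring set)"
  and subspace_annihilator2: "is_subspace (annihilator2 :: 'a::comm_ring set)"
  unfolding is_subspace_def annihilator_def annihilator2_def by (auto simp: algebra_simps)

lemma annihilator_subset_annihilator2: "annihilator \<subseteq> annihilator2"
  unfolding annihilator_def annihilator2_def by auto

lemma products_adjoin:
  assumes "z \<in> annihilator" shows "products (adjoin S z) = products S"
proof
  show "products (adjoin S z) \<subseteq> products S"
  proof
    fix y assume "y \<in> products (adjoin S z)"
    then obtain a s k where "s \<in> S" "y = a * (s + nsmul k z)"
      unfolding products_def mem_adjoin_iff by blast
    moreover have "a * nsmul k z = 0"
      using assms unfolding annihilator_def by (simp add: mult_nsmul_right)
    ultimately show "y \<in> products S"
      unfolding products_def by (auto simp: distrib_left)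
  qed
  show "products S \<subseteq> products (adjoin S z)"
    using subset_adjoin unfolding products_def by blast
qed

lemma foldr_mult_0: "foldr (*) ys 0 = (0 :: 'a::comm_ring)"
  and foldr_mult_add: "foldr (*) ys (x + y) = foldr (*) ys x + foldr (*) ys (y :: 'a::comm_ring)"
  and foldr_mult_uminus: "foldr (*) ys (- x) = - foldr (*) ys (x :: 'a::comm_ring)"
  by (induction ys) (simp_all add: distrib_left)

lemma apow_Suc_Suc: "apow (Suc (Suc k)) = addspan {a * b | a b. b \<in> apow (Suc k)}"
  by simp

text \<open>\<open>foldr (*) [a\<^sub>1, \<dots>, a\<^sub>e] x = a\<^sub>1 * (\<dots> * (a\<^sub>e * x))\<close> is a product of
  \<open>e + 1\<close> elements, so \<open>apow (Suc e) = {0}\<close> says that all such products vanish.\<close>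

lemma foldr_mult_mem_apow: "foldr (*) ys x \<in> apow (Suc (length ys))"
proof (induction ys)
  case (Cons y ys)
  have "foldr (*) (y # ys) x = y * foldr (*) ys x"
    by simp
  also have "\<dots> \<in> apow (Suc (length (y # ys)))"
    unfolding length_Cons apow_Suc_Suc using Cons.IH by (blast intro: addspan.base)
  finally show ?case .
qed simp

lemma foldr_mult_eq_0_if_mem_apow:
  assumes "\<forall>ys x. length ys = m + n \<longrightarrow> foldr (*) ys x = (0 :: 'a::comm_ring)"
    and "(x :: 'a) \<in> apow (Suc m)" "length ys = n"
  shows "foldr (*) ys x = 0"
  using assms
proof (induction m arbitrary: x ys n)
  case 0
  then show ?case by auto
next
  case (Suc m)
  from Suc.prems(2) have "x \<in> addspan {a * b | a b. b \<in> apow (Suc m)}"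
    by simp
  then show ?case
  proof induction
    case (base x)
    then obtain a b where "x = a * b" "b \<in> apow (Suc m)"
      by blast
    moreover have "foldr (*) (ys @ [a]) b = 0"
      using Suc.IH[where n = "Suc n" and x = b and ys = "ys @ [a]"] Suc.prems(1,3) \<open>b \<in> apow (Suc m)\<close>
      by (simp del: apow.simps)
    ultimately show ?case
      by simp
  qed (simp_all add: foldr_mult_0 foldr_mult_add foldr_mult_uminus)
qed

lemma apow_Suc_eq_0_iff:
  "apow (Suc e) = {0 :: 'a::comm_ring} \<longleftrightarrow> (\<forall>ys x. length ys = e \<longrightarrow> foldr (*) ys x = (0 :: 'a))"
proof (intro iffI allI impI)
  fix ys :: "'a list" and x :: 'a
  assume "apow (Suc e) = {0 :: 'a}" "length ys = e"
  then show "foldr (*) ys x = 0"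
    using foldr_mult_mem_apow[of ys x] by (simp del: apow.simps)
next
  assume vanish: "\<forall>ys x. length ys = e \<longrightarrow> foldr (*) ys x = (0 :: 'a)"
  have "(0 :: 'a) \<in> apow (Suc e)"
    by (cases e) (auto intro: addspan.zero)
  moreover have "x = 0" if "x \<in> apow (Suc e)" for x :: 'a
    using foldr_mult_eq_0_if_mem_apow[of e 0 x "[]"] vanish that by (simp del: apow.simps)
  ultimately show "apow (Suc e) = {0 :: 'a}"
    by blast
qed

lemma exists_annihilator_multiple:
  assumes "\<forall>ys. length ys = e \<longrightarrow> foldr (*) ys x = (0 :: 'a::comm_ring)" "x \<notin> annihilator"
  shows "\<exists>z \<in> products {x}. z \<in> annihilator \<and> z \<noteq> 0"
  using assms
proof (induction e arbitrary: x)
  case 0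
  then show ?case
    using subspace_0[OF subspace_annihilator] by auto
next
  case (Suc e)
  obtain c where c: "c * x \<noteq> 0"
    using Suc.prems(2) unfolding annihilator_def by blast
  have cx: "c * x \<in> products {x}"
    unfolding products_def by blast
  show ?case
  proof (cases "c * x \<in> annihilator")
    case True
    then show ?thesis
      using c cx by blast
  next
    case False
    have "\<forall>ys. length ys = e \<longrightarrow> foldr (*) ys (c * x) = 0"
    proof (intro allI impI)
      fix ys :: "'a list" assume "length ys = e"
      then show "foldr (*) ys (c * x) = 0"
        using Suc.prems(1)[rule_format, of "ys @ [c]"] by simp
    qed
    then obtain z where "z \<in> products {c * x}" "z \<in> annihilator" "z \<noteq> 0"
      using Suc.IH False by blast
    moreover have "products {c * x} \<subseteq> products {x}"
      unfolding products_def by (auto simp flip: mult.assoc)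
    ultimately show ?thesis
      by blast
  qed
qed

lemma ann_witness:
  assumes "apow (Suc e) = {0 :: 'a::comm_ring}" "\<not> S \<subseteq> annihilator"
  shows "ann_witness S \<in> products S" "ann_witness S \<in> annihilator" "ann_witness S \<noteq> (0 :: 'a)"
proof -
  obtain x where x: "x \<in> S" "x \<notin> annihilator"
    using assms(2) by blast
  have "\<forall>ys. length ys = e \<longrightarrow> foldr (*) ys x = 0"
    using apow_Suc_eq_0_iff[THEN iffD1, OF assms(1)] by simp
  from exists_annihilator_multiple[OF this x(2)] obtain z
    where z: "z \<in> products {x}" "z \<in> annihilator \<and> z \<noteq> 0" ..
  moreover have "products {x} \<subseteq> products S"
    using x(1) unfolding products_def by auto
  ultimately have "\<exists>z. z \<in> products S \<inter> annihilator \<and> z \<noteq> 0"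
    by auto
  then have "ann_witness S \<in> products S \<inter> annihilator \<and> ann_witness S \<noteq> 0"
    unfolding ann_witness_def by (rule someI_ex)
  then show "ann_witness S \<in> products S" "ann_witness S \<in> annihilator" "ann_witness S \<noteq> 0"
    by simp_all
qed

lemma stable_witness_ann_witness:
  assumes "apow (Suc e) = {0 :: 'a::comm_ring}"
  shows "stable_witness annihilator (ann_witness :: 'a set \<Rightarrow> 'a)"
proof -
  have "ann_witness (adjoin S z) = ann_witness S" if "z \<in> annihilator" for S :: "'a set" and z
    unfolding ann_witness_def using products_adjoin[OF that] by simp
  then show ?thesis
    unfolding stable_witness_def using ann_witness(2,3)[OF assms] by blast
qed

lemma ann_witness_mem_ideal:
  assumes "apow (Suc e) = {0 :: 'a::comm_ring}" "is_ideal (I :: 'a set)" "\<not> I \<subseteq> annihilator"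
  shows "ann_witness I \<in> I"
proof -
  have "ann_witness I \<in> products I"
    by (rule ann_witness(1)[OF assms(1,3)])
  then show ?thesis
    using assms(2) unfolding is_ideal_def products_def by auto
qed

lemma ideal_meets_annihilator2:
  assumes "apow 4 = {0 :: 'a::comm_ring}" "is_ideal (I :: 'a set)" "\<not> I \<subseteq> annihilator2"
  shows "\<not> I \<inter> annihilator2 \<subseteq> annihilator"
proof -
  obtain x a b where "x \<in> I" "a * (b * x) \<noteq> 0"
    using assms(3) unfolding annihilator2_def by blast
  moreover have "c * (d * (b * x)) = 0" for c d
  proof -
    have "c * (d * (b * x)) \<in> apow 4"
      using foldr_mult_mem_apow[of "[c, d, b]" x] by (simp del: apow.simps add: numeral_eq_Suc)
    then show ?thesis
      using assms(1) by simp
  qed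
  ultimately have "b * x \<in> I \<inter> annihilator2" "b * x \<notin> annihilator"
    using assms(2) unfolding is_ideal_def annihilator2_def annihilator_def by blast+
  then show ?thesis
    by blast
qed

lemma exists_not_mem_annihilator:
  assumes "apow 2 \<noteq> {0 :: 'a}"
  obtains b :: "'a::comm_ring" where "b \<notin> annihilator"
proof -
  have "\<not> (\<forall>ys x. length ys = 1 \<longrightarrow> foldr (*) ys x = (0 :: 'a))"
    using assms apow_Suc_eq_0_iff[of 1, where 'a = 'a] by (simp del: apow.simps add: numeral_2_eq_2)
  then obtain ys and b :: 'a where "length ys = 1" "foldr (*) ys b \<noteq> 0"
    by blast
  then have "b \<notin> annihilator"
    unfolding annihilator_def by (auto simp: length_Suc_conv)
  then show thesis
    by (rule that)
qed

lemma class3_witnesses: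
  assumes "apow 4 = {0 :: 'a}" "apow 3 \<noteq> {0 :: 'a}"
  obtains b c :: "'a::comm_ring" where "b * c \<in> annihilator2" "b * c \<notin> annihilator" "c \<notin> annihilator2"
    "annihilator \<noteq> {0 :: 'a}"
proof -
  have "\<not> (\<forall>ys x. length ys = 2 \<longrightarrow> foldr (*) ys x = (0 :: 'a))"
    using assms(2) apow_Suc_eq_0_iff[of 2, where 'a = 'a] by (simp del: apow.simps add: numeral_3_eq_3)
  then obtain a b c :: 'a where abc: "a * (b * c) \<noteq> 0"
    by (auto simp: length_Suc_conv numeral_2_eq_2)
  have vanish: "d * (e * (f * g)) = 0" for d e f g :: 'a
    using foldr_mult_mem_apow[of "[d, e, f]" g] assms(1) by (simp del: apow.simps add: numeral_eq_Suc)
  have "b * c \<in> annihilator2" "b * c \<notin> annihilator" "c \<notin> annihilator2"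
    using abc vanish unfolding annihilator_def annihilator2_def by blast+
  moreover have "a * (b * c) \<in> annihilator"
    using vanish unfolding annihilator_def by blast
  then have "annihilator \<noteq> {0 :: 'a}"
    using abc by blast
  ultimately show thesis
    using that by blast
qed

section \<open>Counting ideals\<close>

text \<open>Below, \<open>i\<close> counts ideals, \<open>a\<close> subspaces inside the annihilator, and \<open>x\<close>, \<open>y\<close>
  the other subspaces, without resp. with their witness.\<close>

lemma ideal_count_arith_class2:
  fixes p a x y i :: nat
  assumes "i \<le> a + y" "p * y \<le> x" "p * (a - 1) \<le> x + y" "p * p \<le> a + x + y" "1 \<le> a"
  shows "p * i \<le> 2 * (a + x + y)"
proof -
  have "p * a \<le> a + x + y"
  proof (cases "a \<le> p")
    case True
    then show ?thesis
      using assms(4) mult_le_mono2[of a p p] by linarith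
  next
    case False
    have "p * a = p * (a - 1) + p"
      using assms(5) by (simp add: algebra_simps)
    then show ?thesis
      using assms(3) False by linarith
  qed
  have "p * i \<le> p * (a + y)"
    using assms(1) by (rule mult_le_mono2)
  also have "\<dots> = p * a + p * y"
    by (simp add: algebra_simps)
  also have "\<dots> \<le> (a + x + y) + x"
    using \<open>p * a \<le> a + x + y\<close> assms(2) by (rule add_mono)
  also have "\<dots> \<le> 2 * (a + x + y)"
    by simp
  finally show ?thesis .
qed

text \<open>Here \<open>t1\<close> counts the subspaces of \<open>annihilator2\<close> not inside the annihilator,
  \<open>t2\<close> those not inside \<open>annihilator2\<close>, and \<open>y1\<close>, \<open>y2\<close> bound the number of ideals
  among them.\<close>

lemma ideal_count_arith_class3:
  fixes p a i y1 y2 t1 t2 :: nat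
  assumes "i \<le> a + y1 + y2" "p * y1 \<le> t1" "p * p * y2 \<le> t2" "2 \<le> a"
    and "2 * (p * p * (a - 1) + p * t1) \<le> t2
      \<or> (p * p * (a - 1) + p * t1 \<le> t2 \<and> p * p \<le> a + t1)"
  shows "p * p * i \<le> 2 * (a + t1 + t2)"
proof -
  have "p * p * i \<le> p * p * (a - 1) + p * p + p * t1 + t2"
  proof -
    have "p * p * i \<le> p * p * (a + y1 + y2)"
      using assms(1) by (rule mult_le_mono2)
    also have "\<dots> = p * p * a + p * (p * y1) + p * p * y2"
      by (simp add: algebra_simps)
    finally have "p * p * i \<le> p * p * a + p * (p * y1) + p * p * y2" .
    moreover have "p * (p * y1) \<le> p * t1"
      using assms(2) by simp
    moreover have "p * p * a = p * p * (a - 1) + p * p"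
      using assms(4) by (simp add: algebra_simps)
    ultimately show ?thesis
      using assms(3) by linarith
  qed
  moreover have "p * p \<le> p * p * (a - 1)"
  proof -
    have "1 \<le> a - 1"
      using assms(4) by linarith
    then show ?thesis
      using mult_le_mono2[of 1 "a - 1" "p * p"] by simp
  qed
  ultimately show ?thesis
    using assms(5) by (elim disjE conjE) arith+
qed

locale elementary_abelian_algebra = elementary_abelian p ty
  for p and ty :: "'a :: {comm_ring, finite} itself"
begin

lemma card_ideals_le_class2:
  assumes "apow 3 = {0 :: 'a}" "apow 2 \<noteq> {0 :: 'a}" "card (UNIV :: 'a set) = p ^ n" "3 \<le> n"
  shows "p * card {I :: 'a set. is_ideal I} \<le> 2 * card {S :: 'a set. is_subspace S}"
proof -
  let ?w = "ann_witness :: 'a set \<Rightarrow> 'a"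
  define A where "A = subspaces_in (annihilator :: 'a set)"
  define X where "X = {S :: 'a set. is_subspace S \<and> S \<subseteq> UNIV \<and> \<not> S \<subseteq> annihilator \<and> ?w S \<notin> S}"
  define Y where "Y = {S :: 'a set. is_subspace S \<and> S \<subseteq> UNIV \<and> \<not> S \<subseteq> annihilator \<and> ?w S \<in> S}"
  have apow3: "apow (Suc 2) = {0 :: 'a}"
    using assms(1) by (simp add: numeral_3_eq_3 del: apow.simps)
  have "card {S :: 'a set. is_subspace S} = card A + card X + card Y"
  proof -
    have "{S :: 'a set. is_subspace S} = A \<union> X \<union> Y" "A \<inter> X = {}" "(A \<union> X) \<inter> Y = {}"
      unfolding A_def X_def Y_def subspaces_in_def by blast+
    then show ?thesis
      by (simp add: card_Un_disjoint)
  qed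
  moreover have "card {I :: 'a set. is_ideal I} \<le> card A + card Y"
  proof -
    have "{I :: 'a set. is_ideal I} \<subseteq> A \<union> Y"
      using ann_witness_mem_ideal[OF apow3] unfolding A_def Y_def subspaces_in_def is_ideal_def
      by blast
    then show ?thesis
      by (meson card_Un_le card_mono finite order_trans)
  qed
  moreover have "p * card Y \<le> card X"
    unfolding X_def Y_def
    by (rule p_card_witness_mem_le[OF stable_witness_ann_witness[OF apow3] order_refl subspace_annihilator])
  moreover have "p * (card A - 1) \<le> card X + card Y"
  proof -
    obtain b :: 'a where "b \<notin> annihilator"
      using exists_not_mem_annihilator[OF assms(2)] .
    then have "p * (card A - 1) \<le> card (subspaces_off annihilator b)"
      unfolding A_def by (rule card_subspaces_off_ge[OF subspace_annihilator])
    also have "\<dots> \<le> card (X \<union> Y)"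
      unfolding X_def Y_def subspaces_off_def by (intro card_mono) auto
    finally show ?thesis
      by (meson card_Un_le order_trans)
  qed
  moreover have "p ^ Suc 2 \<le> card (UNIV :: 'a set)"
    using assms(3,4) p_pos by (simp add: power_increasing)
  then have "p * p \<le> card {S :: 'a set. is_subspace S}"
    using card_subspaces_in_ge[OF subspace_UNIV, of 2] by (simp add: subspaces_in_def power2_eq_square)
  moreover have "1 \<le> card A"
    using subspace_annihilator unfolding A_def subspaces_in_def by (auto simp: Suc_le_eq card_gt_0_iff)
  ultimately show ?thesis
    using ideal_count_arith_class2 by simp
qed

lemma card_ideals_le_class3:
  assumes "apow 4 = {0 :: 'a}" "apow 3 \<noteq> {0 :: 'a}" "card (UNIV :: 'a set) = p ^ n" "4 \<le> n"
  shows "p * p * card {I :: 'a set. is_ideal I} \<le> 2 * card {S :: 'a set. is_subspace S}"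
proof -
  let ?w = "ann_witness :: 'a set \<Rightarrow> 'a"
  let ?Z = "annihilator :: 'a set" and ?B = "annihilator2 :: 'a set"
  define A where "A = subspaces_in ?Z"
  define T1 where "T1 = subspaces_in ?B - A"
  define T2 where "T2 = {S :: 'a set. is_subspace S \<and> \<not> S \<subseteq> ?B}"
  define Y1 where "Y1 = {S :: 'a set. is_subspace S \<and> S \<subseteq> ?B \<and> \<not> S \<subseteq> ?Z \<and> ?w S \<in> S}"
  define Y2 where "Y2 = {S :: 'a set. is_subspace S \<and> \<not> S \<subseteq> ?B \<and> ?w S \<in> S \<and> \<not> S \<inter> ?B \<subseteq> ?Z}"
  have apow4: "apow (Suc 3) = {0 :: 'a}"
    using assms(1) by (simp del: apow.simps)
  note w = stable_witness_ann_witness[OF apow4]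
  obtain b c :: 'a where bc: "b * c \<in> ?B" "b * c \<notin> ?Z" and c: "c \<notin> ?B" and Z: "?Z \<noteq> {0}"
    using class3_witnesses[OF assms(1,2)] by blast
  have B: "card (subspaces_in ?B) = card A + card T1"
    unfolding A_def T1_def using annihilator_subset_annihilator2 by (rule card_subspaces_in_Diff)
  moreover have "T2 = subspaces_in UNIV - subspaces_in ?B" "subspaces_in UNIV = {S :: 'a set. is_subspace S}"
    unfolding T2_def subspaces_in_def by auto
  ultimately have "card {S :: 'a set. is_subspace S} = card A + card T1 + card T2"
    using card_subspaces_in_Diff[of ?B UNIV] by simp
  moreover have "card {I :: 'a set. is_ideal I} \<le> card A + card Y1 + card Y2"
  proof -
    have "{I :: 'a set. is_ideal I} \<subseteq> A \<union> Y1 \<union> Y2"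
      using ann_witness_mem_ideal[OF apow4] ideal_meets_annihilator2[OF assms(1)]
      unfolding A_def Y1_def Y2_def subspaces_in_def is_ideal_def by blast
    then show ?thesis
      by (meson card_Un_le card_mono finite order_trans add_le_mono1)
  qed
  moreover have "p * card Y1 \<le> card T1"
    using p_card_witness_mem_le[OF w order_refl subspace_annihilator, of ?B]
      card_mono[of T1 "{S. is_subspace S \<and> S \<subseteq> ?B \<and> \<not> S \<subseteq> ?Z \<and> ?w S \<notin> S}"]
    unfolding Y1_def T1_def A_def subspaces_in_def by fastforce
  moreover have "p * p * card Y2 \<le> card T2"
    using p2_card_witness_mem_le[OF w subspace_annihilator annihilator_subset_annihilator2
        subspace_annihilator2] card_mono[of T2 "{S. is_subspace S \<and> \<not> S \<subseteq> ?B \<and> ?w S \<notin> S}"]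
    unfolding Y2_def T2_def by fastforce
  moreover have "2 \<le> card A"
    using Z card_mono[of A "{{0}, ?Z}"] subspace_zero subspace_annihilator subspace_0
    unfolding A_def subspaces_in_def by (auto simp: eq_commute)
  moreover have "p ^ Suc (Suc 2) \<le> card (UNIV :: 'a set)"
    using assms(3,4) p_pos by (simp add: power_increasing)
  then have "2 * (p * p * (card A - 1) + p * card T1) \<le> card T2
    \<or> (p * p * (card A - 1) + p * card T1 \<le> card T2 \<and> p * p \<le> card A + card T1)"
    using card_subspaces_not_in_ge[OF subspace_annihilator2 subspace_annihilator
        annihilator_subset_annihilator2 bc c] B
      card_subspaces_in_ge_if_codim_le_1[OF subspace_annihilator2, of 2]
    unfolding A_def T1_def T2_def by (auto simp: power2_eq_square)
  ultimately show ?thesis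
    using ideal_count_arith_class3 by simp
qed

end

theorem proposition2p9:
  fixes p n :: nat
  assumes "prime p"
    and "\<forall>x :: 'a :: {comm_ring, finite}. nsmul p x = 0"
    and "card (UNIV :: 'a set) = p ^ n"
    and "apow p = ({0} :: 'a set)"
  shows "(apow 2 \<noteq> ({0} :: 'a set) \<and> apow 3 = ({0} :: 'a set) \<and> p \<ge> 3 \<and> n \<ge> 3 \<longrightarrow>
            real (num_ideals TYPE('a)) \<le> 2 / real p * real (num_subspaces TYPE('a)))
       \<and> (apow 3 \<noteq> ({0} :: 'a set) \<and> apow 4 = ({0} :: 'a set) \<and> p \<ge> 3 \<and> n \<ge> 4 \<longrightarrow>
            real (num_ideals TYPE('a)) \<le> 2 / real p ^ 2 * real (num_subspaces TYPE('a)))"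
proof -
  interpret elementary_abelian_algebra p "TYPE('a)"
    by unfold_locales (use assms(1,2) in auto)
  have "real p > 0"
    using p_pos by simp
  show ?thesis
  proof (intro conjI impI)
    assume "apow 2 \<noteq> ({0} :: 'a set) \<and> apow 3 = ({0} :: 'a set) \<and> p \<ge> 3 \<and> n \<ge> 3"
    then have "p * num_ideals TYPE('a) \<le> 2 * num_subspaces TYPE('a)"
      unfolding num_ideals_def num_subspaces_def using card_ideals_le_class2 assms(3) by blast
    then show "real (num_ideals TYPE('a)) \<le> 2 / real p * real (num_subspaces TYPE('a))"
      using \<open>real p > 0\<close> by (simp add: field_simps flip: of_nat_mult)
  next
    assume "apow 3 \<noteq> ({0} :: 'a set) \<and> apow 4 = ({0} :: 'a set) \<and> p \<ge> 3 \<and> n \<ge> 4"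
    then have "p * p * num_ideals TYPE('a) \<le> 2 * num_subspaces TYPE('a)"
      unfolding num_ideals_def num_subspaces_def using card_ideals_le_class3 assms(3) by blast
    then show "real (num_ideals TYPE('a)) \<le> 2 / real p ^ 2 * real (num_subspaces TYPE('a))"
      using \<open>real p > 0\<close> by (simp add: field_simps power2_eq_square flip: of_nat_mult)
  qed
qed

end
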